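(* There exist binary Euclidean LCD codes with parameters $[30,11,9]$, $[30,15,7]$ and $[33,11,11]$.
   Context: A binary $[n,k,d]$ code is a $k$-dimensional subspace $C\subseteq\mathbb{F}_2^n$ with minimum nonzero Hamming weight $d$; it is Euclidean LCD if $C\cap C^{\perp_E}=\{0\}$, where $C^{\perp_E}$ is the dual with respect to $\langle x,y\rangle_E=\sum x_iy_i$. *)

theory Defs
  imports Main "HOL-Library.Z2"
begin

definition F2vecs :: "nat \<Rightarrow> bit list set" where
  "F2vecs n = {x. length x = n}"

definition vadd :: "bit list \<Rightarrow> bit list \<Rightarrow> bit list" where
  "vadd x y = map2 (+) x y"

definition vzero :: "nat \<Rightarrow> bit list" where
  "vzero n = replicate n 0"

definition hamming_weight :: "bit list \<Rightarrow> nat" where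
  "hamming_weight x = length (filter (\<lambda>a. a \<noteq> 0) x)"

definition inner_E :: "bit list \<Rightarrow> bit list \<Rightarrow> bit" where
  "inner_E x y = (\<Sum>i<length x. x ! i * y ! i)"

text \<open>A binary linear code of length n: a subspace of F_2^n. Over F_2, closure under
  addition together with containing 0 is exactly closure under linear combinations.\<close>
definition binary_linear_code :: "nat \<Rightarrow> bit list set \<Rightarrow> bool" where
  "binary_linear_code n C \<longleftrightarrow> C \<subseteq> F2vecs n \<and> vzero n \<in> C \<and>
     (\<forall>x\<in>C. \<forall>y\<in>C. vadd x y \<in> C) \<and> (\<forall>c::bit. \<forall>x\<in>C. map ((*) c) x \<in> C)"

definition euclidean_dual :: "nat \<Rightarrow> bit list set \<Rightarrow> bit list set" where
  "euclidean_dual n C = {y \<in> F2vecs n. \<forall>x\<in>C. inner_E x y = 0}"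

definition min_distance :: "bit list set \<Rightarrow> nat" where
  "min_distance C = Min {hamming_weight x | x. x \<in> C \<and> (\<exists>a\<in>set x. a \<noteq> 0)}"

text \<open>A binary [n,k,d] code: a k-dimensional subspace of F_2^n (over F_2, dimension k
  means exactly 2^k elements) with minimum nonzero weight d.\<close>
definition binary_code_params :: "nat \<Rightarrow> nat \<Rightarrow> nat \<Rightarrow> bit list set \<Rightarrow> bool" where
  "binary_code_params n k d C \<longleftrightarrow> binary_linear_code n C \<and> card C = 2 ^ k \<and>
     min_distance C = d"

definition euclidean_LCD :: "nat \<Rightarrow> bit list set \<Rightarrow> bool" where
  "euclidean_LCD n C \<longleftrightarrow> C \<inter> euclidean_dual n C = {vzero n}"

end

theory Submission
  imports Defs
begin

(* Each code is the row space C of an explicit generator matrix G with k rows. We enumerate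
   all 2^k - 1 nonempty sums x of rows of G (a depth-first walk over the subsets, one vector
   addition per step) and check that each has weight at least d and a nonzero syndrome G x^T.
   The weight bound makes the rows independent, so |C| = 2^k, and together with one row sum of
   weight exactly d it gives the minimum distance. A nonzero syndrome means that x is not
   orthogonal to all of C, hence C \<inter> C^\<perp> = {0}. The syndrome is carried along by summing
   rows of the augmented matrix [G G^T | G] instead of rows of G. *)

lemma length_vzero [simp]: "length (vzero n) = n"
  by (simp add: vzero_def)

lemma length_vadd [simp]: "length (vadd x y) = min (length x) (length y)"
  by (simp add: vadd_def)

lemma nth_vadd [simp]: "i < length x \<Longrightarrow> i < length y \<Longrightarrow> vadd x y ! i = x ! i + y ! i"
  by (simp add: vadd_def)

lemma vadd_assoc: "vadd (vadd x y) z = vadd x (vadd y z)"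
  by (rule nth_equalityI) (auto simp: add.assoc)

lemma vadd_left_commute: "vadd x (vadd y z) = vadd y (vadd x z)"
  by (rule nth_equalityI) (auto simp: add.left_commute)

lemma vadd_self: "vadd x x = vzero (length x)"
  by (rule nth_equalityI) (auto simp: vzero_def)

lemma vadd_cancel_left: "length x = length y \<Longrightarrow> vadd x (vadd x y) = y"
  by (rule nth_equalityI) (auto simp: add.assoc[symmetric])

lemma vadd_vzero: "length x = n \<Longrightarrow> vadd x (vzero n) = x"
  by (rule nth_equalityI) (auto simp: vzero_def)

lemma vadd_append:
  "length x = length u \<Longrightarrow> vadd (x @ y) (u @ v) = vadd x u @ vadd y v"
  by (simp add: vadd_def)

lemma inner_E_vadd_right:
  assumes "length y = length r" "length z = length r"
  shows "inner_E r (vadd y z) = inner_E r y + inner_E r z"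
proof -
  (* Z2 declares simp rules turning + and * on bit into xor and and; they are disabled here. *)
  have "inner_E r (vadd y z) = (\<Sum>i<length r. r ! i * y ! i + r ! i * z ! i)"
    unfolding inner_E_def using assms
    by (intro sum.cong) (simp_all add: distrib_left del: add_bit_eq_xor mult_bit_eq_and)
  then show ?thesis
    by (simp only: inner_E_def sum.distrib)
qed

lemma inner_E_vzero_right: "length r = n \<Longrightarrow> inner_E r (vzero n) = 0"
  by (simp add: inner_E_def vzero_def del: mult_bit_eq_and)

fun sum_selected :: "bool list \<Rightarrow> bit list list \<Rightarrow> bit list \<Rightarrow> bit list" where
  "sum_selected (b # bs) (r # rs) acc = sum_selected bs rs (if b then vadd r acc else acc)"
| "sum_selected _ _ acc = acc"

lemma length_sum_selected:
  "length acc = n \<Longrightarrow> \<forall>r\<in>set rs. length r = n \<Longrightarrow> length (sum_selected bs rs acc) = n"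
  by (induction bs rs acc rule: sum_selected.induct) auto

lemma sum_selected_none: "True \<notin> set bs \<Longrightarrow> sum_selected bs rs acc = acc"
  by (induction bs rs acc rule: sum_selected.induct) auto

lemma sum_selected_vadd:
  assumes "length bs = length rs" "length cs = length rs" "\<forall>r\<in>set rs. length r = n"
    "length a = n" "length c = n"
  shows "vadd (sum_selected bs rs a) (sum_selected cs rs c) =
    sum_selected (map2 (\<noteq>) bs cs) rs (vadd a c)"
  using assms
proof (induction rs arbitrary: bs cs a c)
  case (Cons r rs)
  then obtain b bs' c' cs' where "bs = b # bs'" "cs = c' # cs'"
    by (cases bs; cases cs) auto
  with Cons show ?case
    by (cases b; cases c') (auto simp: vadd_assoc vadd_left_commute vadd_cancel_left)
qed simp

lemma sum_selected_map:
  assumes additive: "\<And>x y. length x = n \<Longrightarrow> length y = n \<Longrightarrow> f (vadd x y) = vadd (f x) (f y)"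
    and "\<forall>r\<in>set rs. length r = n" "length acc = n"
  shows "sum_selected bs (map f rs) (f acc) = f (sum_selected bs rs acc)"
  using assms(2,3) by (induction bs rs acc rule: sum_selected.induct) (auto simp: additive)

lemma sum_selected_singleton:
  "r \<in> set rs \<Longrightarrow> \<exists>bs. length bs = length rs \<and> sum_selected bs rs acc = vadd r acc"
proof (induction rs arbitrary: acc)
  case (Cons r' rs)
  show ?case
  proof (cases "r = r'")
    case True
    then have "sum_selected (True # replicate (length rs) False) (r' # rs) acc = vadd r acc"
      by (simp add: sum_selected_none)
    then show ?thesis
      by (metis length_Cons length_replicate)
  next
    case False
    with Cons obtain bs where "length bs = length rs" "sum_selected bs rs acc = vadd r acc"
      by auto
    then show ?thesis
      by (intro exI[of _ "False # bs"]) simp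
  qed
qed simp

lemma True_in_map2_neq:
  "length bs = length cs \<Longrightarrow> bs \<noteq> cs \<Longrightarrow> True \<in> set (map2 (\<noteq>) bs cs)"
  by (induction bs cs rule: list_induct2) auto

lemma hamming_weight_eq_0_iff: "hamming_weight x = 0 \<longleftrightarrow> (\<forall>a\<in>set x. a = 0)"
  by (auto simp: hamming_weight_def filter_empty_conv)

lemma min_distance_eqI:
  assumes "finite C" "\<And>x. x \<in> C \<Longrightarrow> \<exists>a\<in>set x. a \<noteq> 0 \<Longrightarrow> d \<le> hamming_weight x"
    and "w \<in> C" "hamming_weight w = d" "0 < d"
  shows "min_distance C = d"
  unfolding min_distance_def
proof (rule Min_eqI)
  show "d \<in> {hamming_weight x |x. x \<in> C \<and> (\<exists>a\<in>set x. a \<noteq> 0)}"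
    using assms(3-5) hamming_weight_eq_0_iff[of w] by auto
qed (use assms(1,2) in auto)

lemma euclidean_LCD_if_syndromes_nonzero:
  assumes "C \<subseteq> F2vecs n" "vzero n \<in> C" "set R \<subseteq> C"
    and "\<And>x. x \<in> C \<Longrightarrow> x \<noteq> vzero n \<Longrightarrow> \<exists>r\<in>set R. inner_E r x \<noteq> 0"
  shows "euclidean_LCD n C"
proof -
  have "inner_E x (vzero n) = 0" if "x \<in> C" for x
    using that assms(1) unfolding F2vecs_def by (intro inner_E_vzero_right) blast
  then have "vzero n \<in> euclidean_dual n C"
    by (simp add: euclidean_dual_def F2vecs_def)
  moreover have "x = vzero n" if "x \<in> C" "x \<in> euclidean_dual n C" for x
  proof (rule ccontr)
    assume "x \<noteq> vzero n"
    then obtain r where "r \<in> set R" "inner_E r x \<noteq> 0"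
      using assms(4) \<open>x \<in> C\<close> by blast
    moreover have "r \<in> C"
      using \<open>r \<in> set R\<close> assms(3) by blast
    ultimately show False
      using \<open>x \<in> euclidean_dual n C\<close> unfolding euclidean_dual_def by blast
  qed
  ultimately show ?thesis
    unfolding euclidean_LCD_def using assms(2) by blast
qed

definition syndrome :: "bit list list \<Rightarrow> bit list \<Rightarrow> bit list" where
  "syndrome R x = map (\<lambda>r. inner_E r x) R"

definition augment :: "bit list list \<Rightarrow> bit list \<Rightarrow> bit list" where
  "augment R x = syndrome R x @ x"

definition heavy_with_nonzero_syndrome :: "nat \<Rightarrow> nat \<Rightarrow> bit list \<Rightarrow> bool" where
  "heavy_with_nonzero_syndrome k d v \<longleftrightarrow>
     (\<exists>a\<in>set (take k v). a \<noteq> 0) \<and> d \<le> hamming_weight (drop k v)"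

fun all_nonempty_sums :: "(bit list \<Rightarrow> bool) \<Rightarrow> bit list list \<Rightarrow> bit list \<Rightarrow> bool \<Rightarrow> bool" where
  "all_nonempty_sums P [] acc nonempty \<longleftrightarrow> (nonempty \<longrightarrow> P acc)"
| "all_nonempty_sums P (r # rs) acc nonempty \<longleftrightarrow>
     all_nonempty_sums P rs acc nonempty \<and> all_nonempty_sums P rs (vadd r acc) True"

lemma all_nonempty_sumsD:
  "all_nonempty_sums P rs acc nonempty \<Longrightarrow> length bs = length rs \<Longrightarrow>
    nonempty \<or> True \<in> set bs \<Longrightarrow> P (sum_selected bs rs acc)"
proof (induction P rs acc nonempty arbitrary: bs rule: all_nonempty_sums.induct)
  case (2 P r rs acc nonempty)
  then obtain b bs' where "bs = b # bs'"
    by (cases bs) auto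
  with 2 show ?case
    by (cases b) auto
qed simp

definition row_space :: "nat \<Rightarrow> bit list list \<Rightarrow> bit list set" where
  "row_space n R = {sum_selected bs R (vzero n) | bs. length bs = length R}"

context
  fixes n :: nat and R :: "bit list list"
  assumes rows_length: "\<forall>r\<in>set R. length r = n"
begin

lemma row_space_subset: "row_space n R \<subseteq> F2vecs n"
  using length_sum_selected[OF _ rows_length]
  by (auto simp: row_space_def F2vecs_def vzero_def)

lemma vzero_in_row_space: "vzero n \<in> row_space n R"
  unfolding row_space_def
  by (auto intro!: exI[of _ "replicate (length R) False"] simp: sum_selected_none)

lemma row_in_row_space: "r \<in> set R \<Longrightarrow> r \<in> row_space n R"
  using sum_selected_singleton[of r R "vzero n"] rows_length
  by (auto simp: row_space_def vadd_vzero)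

lemma vadd_in_row_space:
  assumes "x \<in> row_space n R" "y \<in> row_space n R"
  shows "vadd x y \<in> row_space n R"
proof -
  obtain bs cs where "length bs = length R" "x = sum_selected bs R (vzero n)"
    "length cs = length R" "y = sum_selected cs R (vzero n)"
    using assms by (auto simp: row_space_def)
  then have "vadd x y = sum_selected (map2 (\<noteq>) bs cs) R (vzero n)"
      and "length (map2 (\<noteq>) bs cs) = length R"
    using sum_selected_vadd[OF _ _ rows_length] vadd_self[of "vzero n"]
    by (simp_all add: vzero_def)
  then show ?thesis
    unfolding row_space_def by blast
qed

lemma binary_linear_code_row_space: "binary_linear_code n (row_space n R)"
  unfolding binary_linear_code_def
proof (intro conjI ballI allI row_space_subset vzero_in_row_space vadd_in_row_space)
  fix c :: bit and x
  assume x: "x \<in> row_space n R"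
  then have "length x = n"
    using row_space_subset by (auto simp: F2vecs_def)
  then have "map ((*) c) x = (if c = 0 then vzero n else x)"
    by (cases c) (auto intro!: nth_equalityI simp: vzero_def)
  then show "map ((*) c) x \<in> row_space n R"
    using x vzero_in_row_space by auto
qed

lemma row_space_eq_image:
  "row_space n R = (\<lambda>bs. sum_selected bs R (vzero n)) ` {bs. length bs = length R}"
  by (auto simp: row_space_def)

lemma finite_row_space: "finite (row_space n R)"
  using finite_lists_length_eq[of "UNIV :: bool set"] by (simp add: row_space_eq_image)

lemma card_row_space:
  assumes independent:
    "\<And>bs. length bs = length R \<Longrightarrow> True \<in> set bs \<Longrightarrow> sum_selected bs R (vzero n) \<noteq> vzero n"
  shows "card (row_space n R) = 2 ^ length R"
proof -
  let ?x = "\<lambda>bs. sum_selected bs R (vzero n)"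
  have "inj_on ?x {bs. length bs = length R}"
  proof (rule inj_onI, rule ccontr)
    fix bs cs
    assume "bs \<in> {bs. length bs = length R}" "cs \<in> {bs. length bs = length R}"
      and eq: "?x bs = ?x cs" and "bs \<noteq> cs"
    then have lengths: "length bs = length R" "length cs = length R"
      by simp_all
    have "?x (map2 (\<noteq>) bs cs) = vadd (?x bs) (?x cs)"
      using sum_selected_vadd[OF lengths rows_length, of "vzero n" "vzero n"] vadd_self[of "vzero n"]
      by simp
    also have "\<dots> = vzero n"
      using vadd_self[of "?x cs"] length_sum_selected[OF _ rows_length, of "vzero n" cs]
      by (simp add: eq)
    finally show False
      using independent True_in_map2_neq[OF _ \<open>bs \<noteq> cs\<close>] lengths by simp
  qed
  then have "card (row_space n R) = card {bs :: bool list. length bs = length R}"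
    by (simp add: row_space_eq_image card_image)
  then show ?thesis
    using card_lists_length_eq[of "UNIV :: bool set" "length R"] by simp
qed

lemma row_space_nonzeroE:
  assumes "x \<in> row_space n R" "x \<noteq> vzero n"
  obtains bs where "length bs = length R" "True \<in> set bs" "x = sum_selected bs R (vzero n)"
proof -
  obtain bs where "length bs = length R" "x = sum_selected bs R (vzero n)"
    using assms(1) by (auto simp: row_space_def)
  moreover have "True \<in> set bs"
    using calculation assms(2) sum_selected_none by metis
  ultimately show ?thesis
    using that by blast
qed

lemma row_space_LCD_params:
  assumes "0 < d" "w \<in> row_space n R" "hamming_weight w = d"
    and heavy: "\<And>bs. length bs = length R \<Longrightarrow> True \<in> set bs \<Longrightarrow>
      d \<le> hamming_weight (sum_selected bs R (vzero n))"
    and syndrome_nonzero: "\<And>bs. length bs = length R \<Longrightarrow> True \<in> set bs \<Longrightarrow>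
      \<exists>r\<in>set R. inner_E r (sum_selected bs R (vzero n)) \<noteq> 0"
  shows "binary_code_params n (length R) d (row_space n R) \<and> euclidean_LCD n (row_space n R)"
proof -
  have "hamming_weight (vzero n) = 0"
    by (simp add: hamming_weight_eq_0_iff vzero_def)
  then have "sum_selected bs R (vzero n) \<noteq> vzero n"
    if "length bs = length R" "True \<in> set bs" for bs
    using heavy[OF that] \<open>0 < d\<close> by auto
  then have "card (row_space n R) = 2 ^ length R"
    by (rule card_row_space)
  moreover have "min_distance (row_space n R) = d"
  proof (rule min_distance_eqI[OF finite_row_space _ assms(2,3,1)])
    fix x
    assume x: "x \<in> row_space n R" and "\<exists>a\<in>set x. a \<noteq> 0"
    then have "x \<noteq> vzero n"
      by (auto simp: vzero_def)
    with x obtain bs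
      where "length bs = length R" "True \<in> set bs" "x = sum_selected bs R (vzero n)"
      by (rule row_space_nonzeroE)
    then show "d \<le> hamming_weight x"
      using heavy by simp
  qed
  moreover have "euclidean_LCD n (row_space n R)"
  proof (rule euclidean_LCD_if_syndromes_nonzero[OF row_space_subset vzero_in_row_space])
    show "set R \<subseteq> row_space n R"
      using row_in_row_space by blast
    fix x
    assume "x \<in> row_space n R" "x \<noteq> vzero n"
    then obtain bs
      where "length bs = length R" "True \<in> set bs" "x = sum_selected bs R (vzero n)"
      by (rule row_space_nonzeroE)
    then show "\<exists>r\<in>set R. inner_E r x \<noteq> 0"
      using syndrome_nonzero by simp
  qed
  ultimately show ?thesis
    by (simp add: binary_code_params_def binary_linear_code_row_space)
qed

lemma augment_vadd:
  assumes "length x = n" "length y = n"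
  shows "augment R (vadd x y) = vadd (augment R x) (augment R y)"
proof -
  have "syndrome R (vadd x y) = map (\<lambda>r. inner_E r x + inner_E r y) R"
    unfolding syndrome_def using assms rows_length
    by (intro map_cong) (simp_all add: inner_E_vadd_right del: add_bit_eq_xor)
  also have "\<dots> = vadd (syndrome R x) (syndrome R y)"
    by (simp add: syndrome_def vadd_def zip_map_map zip_same_conv_map del: add_bit_eq_xor)
  finally have "syndrome R (vadd x y) = vadd (syndrome R x) (syndrome R y)" .
  then show ?thesis
    using assms by (simp add: augment_def vadd_append syndrome_def)
qed

lemma augment_vzero: "augment R (vzero n) = vzero (length R + n)"
proof -
  have "syndrome R (vzero n) = map (\<lambda>_. 0) R"
    unfolding syndrome_def by (rule map_cong) (simp_all add: rows_length inner_E_vzero_right)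
  then show ?thesis
    by (simp add: augment_def vzero_def replicate_add map_replicate_const)
qed

lemma row_space_LCD_params_by_enumeration:
  assumes "length R = k" "0 < d" "w \<in> row_space n R" "hamming_weight w = d"
    and enumeration: "all_nonempty_sums (heavy_with_nonzero_syndrome k d)
      (map (augment R) R) (vzero (k + n)) False"
  shows "binary_code_params n k d (row_space n R) \<and> euclidean_LCD n (row_space n R)"
  unfolding assms(1)[symmetric]
proof (rule row_space_LCD_params[OF assms(2-4)])
  fix bs
  assume bs: "length bs = length R" "True \<in> set bs"
  let ?x = "sum_selected bs R (vzero n)"
  let ?augmented_sum = "sum_selected bs (map (augment R) R) (vzero (length R + n))"
  have "length bs = length (map (augment R) R)"
    using bs(1) by simp
  then have "heavy_with_nonzero_syndrome (length R) d ?augmented_sum"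
    using all_nonempty_sumsD[OF enumeration[folded assms(1)]] bs(2) by simp
  moreover have "?augmented_sum = augment R ?x"
    unfolding augment_vzero[symmetric]
    by (rule sum_selected_map[where f = "augment R", OF augment_vadd rows_length]) simp_all
  moreover have "length ?x = n"
    using length_sum_selected[OF _ rows_length] by simp
  ultimately show "d \<le> hamming_weight ?x" and "\<exists>r\<in>set R. inner_E r ?x \<noteq> 0"
    by (auto simp: heavy_with_nonzero_syndrome_def augment_def syndrome_def)
qed

end

lemma inner_E_Cons: "inner_E (a # x) (b # y) = a * b + inner_E x y"
  unfolding inner_E_def by (simp only: length_Cons sum.lessThan_Suc_shift nth_Cons_0 nth_Cons_Suc)

lemma inner_E_Nil: "inner_E [] y = 0"
  by (simp add: inner_E_def)

lemma vadd_Cons: "vadd (a # x) (b # y) = (a + b) # vadd x y"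
  and vadd_Nil: "vadd [] [] = []"
  by (simp_all add: vadd_def)

lemma bit_arith: "(0::bit) * x = 0" "(1::bit) * x = x" "(0::bit) + x = x" "x + (0::bit) = x"
  "(1::bit) + 1 = 0"
  by simp_all

lemma Suc_le_hamming_weight_Cons:
  "Suc d \<le> hamming_weight (a # x) \<longleftrightarrow>
    (if a = 0 then Suc d \<le> hamming_weight x else d \<le> hamming_weight x)"
  by (simp add: hamming_weight_def)

lemma Suc_le_hamming_weight_Nil: "Suc d \<le> hamming_weight [] \<longleftrightarrow> False"
  by (simp add: hamming_weight_def)

lemma heavy_with_nonzero_syndrome_0: "heavy_with_nonzero_syndrome 0 d v \<longleftrightarrow> False"
  by (simp add: heavy_with_nonzero_syndrome_def)

lemma heavy_with_nonzero_syndrome_Suc_Cons: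
  "heavy_with_nonzero_syndrome (Suc k) d (a # v) \<longleftrightarrow>
    (if a = 0 then heavy_with_nonzero_syndrome k d v else d \<le> hamming_weight (drop k v))"
  by (simp add: heavy_with_nonzero_syndrome_def)

(* Numerals are unfolded to Suc-terms. With if_weak_cong only the selected branch of an if is
   evaluated, so the tests stop at the first nonzero syndrome bit and at the d-th nonzero entry. *)
lemmas enumeration_evaluation =
  list.map augment_def syndrome_def inner_E_Cons inner_E_Nil bit_arith append.simps
  list.size vzero_def numeral_eq_Suc pred_numeral_simps BitM.simps add_Suc add_0 replicate.simps
  all_nonempty_sums.simps vadd_Cons vadd_Nil
  heavy_with_nonzero_syndrome_0 heavy_with_nonzero_syndrome_Suc_Cons drop_Suc_Cons drop_0
  Suc_le_hamming_weight_Cons Suc_le_hamming_weight_Nil le0 one_neq_zero if_True if_False simp_thms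

definition generator_30_11 :: "bit list list" where
  "generator_30_11 = [
    [0,0,0,0,0,0,0,0,0,0,1,1,1,1,1,0,1,0,1,1,1,0,1,0,0,0,0,1,1,0],
    [0,0,0,0,0,0,0,0,0,1,0,1,1,1,0,1,0,1,1,1,0,1,0,0,0,0,0,1,1,0],
    [0,0,0,0,0,0,0,0,1,0,0,1,1,0,1,0,1,1,1,0,1,1,0,0,0,0,1,1,0,1],
    [0,0,0,0,0,0,0,1,0,0,0,1,0,1,0,1,1,1,0,1,1,1,0,0,0,1,1,0,0,0],
    [0,0,0,0,0,0,1,0,0,0,0,0,1,0,1,1,1,0,1,1,1,1,0,0,1,1,1,0,1,0],
    [0,0,0,0,0,1,0,0,0,0,0,1,0,1,1,1,0,1,1,1,1,0,0,1,1,1,0,1,0,0],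
    [0,0,0,0,1,0,0,0,0,0,0,0,1,1,1,0,1,1,1,1,0,1,1,1,1,0,0,0,0,0],
    [0,0,0,1,0,0,0,0,0,0,0,1,1,1,0,1,1,1,1,0,1,0,1,1,0,0,1,0,0,0],
    [0,0,1,0,0,0,0,0,0,0,0,1,1,0,1,1,1,1,0,1,0,1,1,0,0,1,0,0,0,1],
    [0,1,0,0,0,0,0,0,0,0,0,1,0,1,1,1,1,0,1,0,1,1,0,0,1,0,0,0,0,1],
    [1,0,0,0,0,0,0,0,0,0,0,0,1,1,1,1,0,1,0,1,1,1,0,1,0,0,0,0,1,1]]"

lemma generator_30_11_LCD:
  "binary_code_params 30 11 9 (row_space 30 generator_30_11) \<and>
    euclidean_LCD 30 (row_space 30 generator_30_11)"
proof -
  let ?G = generator_30_11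
  have rows: "\<forall>r\<in>set ?G. length r = 30" and "length ?G = 11"
    by (simp_all add: generator_30_11_def)
  let ?w = "vadd (?G ! 0) (?G ! 1)"
  have "?w \<in> row_space 30 ?G"
    by (intro vadd_in_row_space[OF rows] row_in_row_space[OF rows])
      (simp_all add: generator_30_11_def)
  moreover have "hamming_weight ?w = 9"
    by (simp add: generator_30_11_def hamming_weight_def vadd_def)
  moreover have "all_nonempty_sums (heavy_with_nonzero_syndrome 11 9)
      (map (augment ?G) ?G) (vzero (11 + 30)) False"
    unfolding generator_30_11_def by (simp only: enumeration_evaluation cong: if_weak_cong)
  ultimately show ?thesis
    using row_space_LCD_params_by_enumeration[OF rows \<open>length ?G = 11\<close>, of 9] by simp
qed

definition generator_30_15 :: "bit list list" where
  "generator_30_15 = [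
    [0,0,0,0,0,0,0,0,0,0,0,0,0,0,1,0,0,1,0,0,0,0,0,0,1,1,1,1,1,1],
    [0,0,0,0,0,0,0,0,0,0,0,0,0,1,0,0,1,0,0,0,0,1,0,1,1,1,1,1,1,0],
    [0,0,0,0,0,0,0,0,0,0,0,0,1,0,0,1,0,0,0,0,1,0,1,1,1,1,1,1,0,0],
    [0,0,0,0,0,0,0,0,0,0,0,1,0,0,0,0,0,0,0,1,0,0,1,1,1,1,1,0,0,1],
    [0,0,0,0,0,0,0,0,0,0,1,0,0,0,0,0,0,0,1,0,0,1,1,1,1,1,0,0,1,0],
    [0,0,0,0,0,0,0,0,0,1,0,0,0,0,0,0,0,1,0,0,1,1,1,1,1,0,0,1,0,0],
    [0,0,0,0,0,0,0,0,1,0,0,0,0,0,0,0,1,0,0,1,1,1,1,1,0,0,1,0,0,0],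
    [0,0,0,0,0,0,0,1,0,0,0,0,0,0,0,1,0,0,1,1,1,1,1,0,0,1,0,0,0,0],
    [0,0,0,0,0,0,1,0,0,0,0,0,0,0,0,0,0,1,1,1,1,1,0,0,1,0,0,0,0,1],
    [0,0,0,0,0,1,0,0,0,0,0,0,0,0,0,0,1,1,1,1,1,1,0,1,0,0,0,0,1,0],
    [0,0,0,0,1,0,0,0,0,0,0,0,0,0,0,1,1,1,1,1,1,0,1,0,0,0,0,1,0,0],
    [0,0,0,1,0,0,0,0,0,0,0,0,0,0,0,1,1,1,1,1,0,0,0,0,0,0,1,0,0,1],
    [0,0,1,0,0,0,0,0,0,0,0,0,0,0,0,1,1,1,1,0,0,1,0,0,0,1,0,0,1,1],
    [0,1,0,0,0,0,0,0,0,0,0,0,0,0,0,1,1,1,0,0,1,0,0,0,1,0,0,1,1,1],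
    [1,0,0,0,0,0,0,0,0,0,0,0,0,0,0,1,1,0,0,1,0,0,0,1,0,0,1,1,1,1]]"

lemma generator_30_15_LCD:
  "binary_code_params 30 15 7 (row_space 30 generator_30_15) \<and>
    euclidean_LCD 30 (row_space 30 generator_30_15)"
proof -
  let ?G = generator_30_15
  have rows: "\<forall>r\<in>set ?G. length r = 30" and "length ?G = 15"
    by (simp_all add: generator_30_15_def)
  let ?w = "vadd (?G ! 0) (?G ! 1)"
  have "?w \<in> row_space 30 ?G"
    by (intro vadd_in_row_space[OF rows] row_in_row_space[OF rows])
      (simp_all add: generator_30_15_def)
  moreover have "hamming_weight ?w = 7"
    by (simp add: generator_30_15_def hamming_weight_def vadd_def)
  moreover have "all_nonempty_sums (heavy_with_nonzero_syndrome 15 7)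
      (map (augment ?G) ?G) (vzero (15 + 30)) False"
    unfolding generator_30_15_def by (simp only: enumeration_evaluation cong: if_weak_cong)
  ultimately show ?thesis
    using row_space_LCD_params_by_enumeration[OF rows \<open>length ?G = 15\<close>, of 7] by simp
qed

definition generator_33_11 :: "bit list list" where
  "generator_33_11 = [
    [0,0,0,0,0,0,0,0,0,0,1,0,1,0,0,1,1,1,1,0,1,1,1,1,1,0,1,0,1,0,1,1,0],
    [0,0,0,0,0,0,0,0,0,1,0,1,0,0,1,1,1,1,0,1,1,0,1,1,0,1,0,1,0,1,1,0,1],
    [0,0,0,0,0,0,0,0,1,0,0,0,0,1,1,1,1,0,1,1,0,1,1,0,1,0,1,0,1,1,0,1,1],
    [0,0,0,0,0,0,0,1,0,0,0,0,1,1,1,1,0,1,1,0,1,0,0,1,0,1,0,1,1,0,1,1,1],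
    [0,0,0,0,0,0,1,0,0,0,0,1,1,1,1,0,1,1,0,1,0,0,1,0,1,0,1,1,0,1,1,1,0],
    [0,0,0,0,0,1,0,0,0,0,0,1,1,1,0,1,1,0,1,0,0,1,0,1,0,1,1,0,1,1,1,0,1],
    [0,0,0,0,1,0,0,0,0,0,0,1,1,0,1,1,0,1,0,0,1,1,1,0,1,1,0,1,1,1,0,1,0],
    [0,0,0,1,0,0,0,0,0,0,0,1,0,1,1,0,1,0,0,1,1,1,0,1,1,0,1,1,1,0,1,0,1],
    [0,0,1,0,0,0,0,0,0,0,0,0,1,1,0,1,0,0,1,1,1,1,1,1,0,1,1,1,0,1,0,1,0],
    [0,1,0,0,0,0,0,0,0,0,0,1,1,0,1,0,0,1,1,1,1,0,1,0,1,1,1,0,1,0,1,0,1],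
    [1,0,0,0,0,0,0,0,0,0,0,1,0,1,0,0,1,1,1,1,0,1,0,1,1,1,0,1,0,1,0,1,1]]"

lemma generator_33_11_LCD:
  "binary_code_params 33 11 11 (row_space 33 generator_33_11) \<and>
    euclidean_LCD 33 (row_space 33 generator_33_11)"
proof -
  let ?G = generator_33_11
  have rows: "\<forall>r\<in>set ?G. length r = 33" and "length ?G = 11"
    by (simp_all add: generator_33_11_def)
  let ?w = "vadd (?G ! 0) (vadd (?G ! 1) (?G ! 2))"
  have "?w \<in> row_space 33 ?G"
    by (intro vadd_in_row_space[OF rows] row_in_row_space[OF rows])
      (simp_all add: generator_33_11_def)
  moreover have "hamming_weight ?w = 11"
    by (simp add: generator_33_11_def hamming_weight_def vadd_def)
  moreover have "all_nonempty_sums (heavy_with_nonzero_syndrome 11 11)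
      (map (augment ?G) ?G) (vzero (11 + 33)) False"
    unfolding generator_33_11_def by (simp only: enumeration_evaluation cong: if_weak_cong)
  ultimately show ?thesis
    using row_space_LCD_params_by_enumeration[OF rows \<open>length ?G = 11\<close>, of 11] by simp
qed

theorem proposition4p6:
  shows "(\<exists>C. binary_code_params 30 11 9 C \<and> euclidean_LCD 30 C) \<and>
         (\<exists>C. binary_code_params 30 15 7 C \<and> euclidean_LCD 30 C) \<and>
         (\<exists>C. binary_code_params 33 11 11 C \<and> euclidean_LCD 33 C)"
  using generator_30_11_LCD generator_30_15_LCD generator_33_11_LCD by blast

end
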